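(* Let $0<\varepsilon\le 1/15$, $m\ge 3$, $p=1/m$, and $i\in[n]$. Suppose $\mathcal{A},\mathcal{B}\subset[m]^n$ are cross-intersecting with $\mu(\mathcal{A}),\mu(\mathcal{B})\ge(1-\varepsilon)p$ and $T_i(\mathcal{A}),T_i(\mathcal{B})\subset D_{i\to 1}$. Then there is $j\in[m]$ such that $\mu(\mathcal{A}\cap D_{i\to j})\ge(1-3\varepsilon)p$ and $\mu(\mathcal{B}\cap D_{i\to j})\ge(1-3\varepsilon)p$.
   Context: $\mu$ is the uniform probability measure on $[m]^n$. $\mathcal{A},\mathcal{B}$ are cross-intersecting if for every $x\in\mathcal{A}$, $y\in\mathcal{B}$ there is $k$ with $x_k=y_k$. $D_{i\to j}=\{x\in[m]^n:x_i=j\}$. For $i\in[n]$, $j\in[m]$, the map $T_{i,j}:[m]^n\to[m]^n$ sends $x$ to $y$ with $y_r=x_r$ for $r\ne i$, $y_i=1$ if $x_i=j$ and $y_i=x_i$ otherwise; on families, $T_{i,j}(\mathcal{F})=\{x: T_{i,j}(x)\in\mathcal{F}\}\cup\{T_{i,j}(x):x\in\mathcal{F}\}$. Finally $T_i=T_{i,2}\circ T_{i,3}\circ\cdots\circ T_{i,m}$ (applied to families). *)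

theory Defs
  imports Complex_Main "HOL-Library.FuncSet"
begin

definition cube :: "nat \<Rightarrow> nat \<Rightarrow> (nat \<Rightarrow> nat) set" where
  "cube m n = PiE {1..n} (\<lambda>_. {1..m})"

definition mu :: "nat \<Rightarrow> nat \<Rightarrow> (nat \<Rightarrow> nat) set \<Rightarrow> real" where
  "mu m n F = real (card (F \<inter> cube m n)) / real m ^ n"

definition cross_intersecting :: "nat \<Rightarrow> (nat \<Rightarrow> nat) set \<Rightarrow> (nat \<Rightarrow> nat) set \<Rightarrow> bool" where
  "cross_intersecting n A B \<longleftrightarrow> (\<forall>x\<in>A. \<forall>y\<in>B. \<exists>k\<in>{1..n}. x k = y k)"

definition dict :: "nat \<Rightarrow> nat \<Rightarrow> nat \<Rightarrow> nat \<Rightarrow> (nat \<Rightarrow> nat) set" where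
  "dict m n i j = {x \<in> cube m n. x i = j}"

definition Tpt :: "nat \<Rightarrow> nat \<Rightarrow> (nat \<Rightarrow> nat) \<Rightarrow> (nat \<Rightarrow> nat)" where
  "Tpt i j x = x(i := (if x i = j then 1 else x i))"

definition Tfam :: "nat \<Rightarrow> nat \<Rightarrow> (nat \<Rightarrow> nat) set \<Rightarrow> (nat \<Rightarrow> nat) set" where
  "Tfam i j F = {x \<in> F. Tpt i j x \<in> F} \<union> Tpt i j ` F"

fun Tupto :: "nat \<Rightarrow> nat \<Rightarrow> (nat \<Rightarrow> nat) set \<Rightarrow> (nat \<Rightarrow> nat) set" where
  "Tupto i k F = (if k < 2 then F else Tupto i (k - 1) (Tfam i k F))"

definition Ti :: "nat \<Rightarrow> nat \<Rightarrow> (nat \<Rightarrow> nat) set \<Rightarrow> (nat \<Rightarrow> nat) set" where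
  "Ti m i F = Tupto i m F"

end

theory Submission
  imports Defs
begin

(* If T_i(A) lies in D_{i->1}, no two members of A differ only in coordinate i, so for every
   set S of values the members x of A with x_i in S project injectively onto [m]^([n]-{i}), and
   for disjoint S, T these projections of A and B are cross-intersecting. Cross-intersecting
   families in [m]^I with m >= 3 satisfy (1 + 3 mu(F)) (1 + 3 mu(G)) <= 4: by induction on I,
   splitting along one coordinate leaves numbers u_c, v_c >= 1 (c in [m]) with u_c v_d <= 4 for
   c ~= d, and comparing every u_c with the two largest values of v gives
   (sum u) (sum v) <= 4 m^2. So the measures a_j, b_j of the projected slices satisfy
   (1 + 3 a(S)) (1 + 3 b(T)) <= 4 for disjoint S, T, with a and b of total mass at least 1 - eps.
   Crossing S with its complement shows that no a(S) + b(S) lies in [1/2, 3/2]; as the summands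
   cannot jump over this gap unless one exceeds 1, some j has a_j + b_j > 1, and then j carries
   all but 3 eps of both masses. *)

lemma power2_add_mult_le:
  fixes X Y M :: real
  assumes "Y \<le> X" "X \<le> (M - 1)^2 * Y"
  shows "(X + (M - 1) * Y)^2 \<le> M^2 * (X * Y)"
proof -
  have "(X + (M - 1) * Y)^2 - M^2 * (X * Y) = (X - Y) * (X - (M - 1)^2 * Y)"
    by (simp add: power2_eq_square algebra_simps)
  also have "\<dots> \<le> 0" using assms by (intro mult_nonneg_nonpos) simp_all
  finally show ?thesis by simp
qed

lemma sum_mult_sum_le_if_offdiag_le:
  fixes u v :: "'a \<Rightarrow> real" and k :: real
  assumes K: "finite K" "2 \<le> card K"
    and u1: "\<And>c. c \<in> K \<Longrightarrow> 1 \<le> u c" and v1: "\<And>c. c \<in> K \<Longrightarrow> 1 \<le> v c"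
    and offdiag: "\<And>c d. c \<in> K \<Longrightarrow> d \<in> K \<Longrightarrow> c \<noteq> d \<Longrightarrow> u c * v d \<le> k"
    and k: "k \<le> (real (card K) - 1)^2"
  shows "sum u K * sum v K \<le> k * real (card K)^2"
proof -
  define M where "M = real (card K)"
  have "K \<noteq> {}" using K by auto
  obtain p where p: "p \<in> K" and p_max: "\<And>c. c \<in> K \<Longrightarrow> v c \<le> v p"
    using obtains_MAX[OF K(1) \<open>K \<noteq> {}\<close>, of v] Max_ge[OF finite_imageI[OF K(1)]] by (metis image_eqI)
  have "card (K - {p}) = card K - 1" using p by simp
  then have K': "finite (K - {p})" "K - {p} \<noteq> {}" and card_K': "card (K - {p}) = M - 1"
    using K by (force, force, simp add: M_def of_nat_diff)
  obtain q where q: "q \<in> K - {p}" and q_max: "\<And>c. c \<in> K - {p} \<Longrightarrow> v c \<le> v q"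
    using obtains_MAX[OF K', of v] Max_ge[OF finite_imageI[OF K'(1)]] by (metis image_eqI)
  define X Y where "X = v p" and "Y = v q"
  have Y1: "1 \<le> Y" and YX: "Y \<le> X" using q v1 p_max by (auto simp: X_def Y_def)
  have "X \<le> u q * X" using q u1 YX Y1 by (simp add: mult_le_cancel_right1)
  also have "\<dots> \<le> k" using offdiag q p by (auto simp: X_def)
  finally have Xk: "X \<le> k" .
  \<comment> \<open>pair \<open>u p\<close> with \<open>Y\<close> and every other \<open>u c\<close> with \<open>X\<close>\<close>
  have "X * Y * sum u K = X * (Y * u p) + Y * (\<Sum>c\<in>K - {p}. X * u c)"
    using K p by (simp add: sum.remove sum_distrib_left algebra_simps)
  also have "\<dots> \<le> X * k + Y * (\<Sum>c\<in>K - {p}. k)"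
    using offdiag p q YX Y1
    by (intro add_mono mult_left_mono sum_mono) (auto simp: X_def Y_def mult.commute)
  finally have su: "X * Y * sum u K \<le> k * (X + (M - 1) * Y)"
    using card_K' by (simp add: algebra_simps)
  have "sum v K = X + (\<Sum>c\<in>K - {p}. v c)"
    using K p by (simp add: X_def sum.remove)
  also have "\<dots> \<le> X + (M - 1) * Y"
    using sum_mono[of "K - {p}" v "\<lambda>_. Y"] q_max card_K' by (simp add: Y_def)
  finally have sv: "sum v K \<le> X + (M - 1) * Y" .
  have "X \<le> (M - 1)^2 * Y"
    using Xk k Y1 mult_left_mono[OF Y1, of "(M - 1)^2"] by (simp add: M_def)
  with YX have key: "(X + (M - 1) * Y)^2 \<le> M^2 * (X * Y)"
    by (rule power2_add_mult_le)
  have "0 \<le> sum v K" using v1 by (intro sum_nonneg) (meson order_trans zero_le_one)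
  have "X * Y * (sum u K * sum v K) = (X * Y * sum u K) * sum v K" by simp
  also have "\<dots> \<le> k * (X + (M - 1) * Y) * (X + (M - 1) * Y)"
    using \<open>0 \<le> sum v K\<close> Xk Y1 YX K(2) by (intro mult_mono[OF su sv]) (auto simp: M_def)
  also have "\<dots> \<le> X * Y * (k * M^2)"
    using mult_left_mono[OF key, of k] Xk Y1 YX by (simp add: power2_eq_square algebra_simps)
  finally show ?thesis using Y1 YX unfolding M_def by simp
qed

lemma sum_less_if_subset_sums_avoid:
  fixes w :: "'a \<Rightarrow> real"
  assumes "finite K" "0 < lo" "\<And>x. x \<in> K \<Longrightarrow> w x \<le> d"
    and avoid: "\<And>S. S \<subseteq> K \<Longrightarrow> sum w S < lo \<or> lo + d < sum w S"
  shows "sum w K < lo"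
proof -
  have "sum w S < lo" if "S \<subseteq> K" for S
    using finite_subset[OF that \<open>finite K\<close>] that
  proof (induction S rule: finite_induct)
    case (insert x S)
    then have "sum w (insert x S) \<le> lo + d" using assms(3) by fastforce
    then show ?case using avoid[OF insert.prems] by linarith
  qed (use \<open>0 < lo\<close> in simp)
  then show ?thesis by blast
qed

lemma cross_bound_subset_mass:
  fixes a b :: "'a \<Rightarrow> real" and eps :: real
  assumes "finite K"
    and a0: "\<And>j. j \<in> K \<Longrightarrow> 0 \<le> a j" and b0: "\<And>j. j \<in> K \<Longrightarrow> 0 \<le> b j"
    and cross: "\<And>S T. S \<subseteq> K \<Longrightarrow> T \<subseteq> K \<Longrightarrow> S \<inter> T = {} \<Longrightarrow>
                  (1 + 3 * sum a S) * (1 + 3 * sum b T) \<le> 4"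
    and s: "1 - eps \<le> sum a K" and t: "1 - eps \<le> sum b K"
    and S: "S \<subseteq> K"
  shows "(1 - eps) * (sum a S + sum b S) - (sum a S + sum b S)^2 / 2 \<le> 2 * eps / 3"
proof -
  define P Q where "P = sum a S" and "Q = sum b S"
  have compl: "sum a (K - S) = sum a K - P" "sum b (K - S) = sum b K - Q"
    using S \<open>finite K\<close> by (simp_all add: P_def Q_def sum_diff finite_subset)
  have "(1 + 3 * P) * (1 + 3 * (sum b K - Q)) \<le> 4"
    using cross[of S "K - S"] S compl by (auto simp: P_def)
  moreover have "(1 + 3 * (sum a K - P)) * (1 + 3 * Q) \<le> 4"
    using cross[of "K - S" S] S compl by (auto simp: Q_def)
  ultimately have "P * sum b K + Q * sum a K - 2 * P * Q \<le> 2 * eps / 3"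
    using s t by (simp add: algebra_simps)
  moreover have "(1 - eps) * (P + Q) \<le> P * sum b K + Q * sum a K"
  proof -
    have "0 \<le> P" "0 \<le> Q" using S a0 b0 by (auto simp: P_def Q_def intro: sum_nonneg)
    then have "P * (1 - eps) \<le> P * sum b K" "Q * (1 - eps) \<le> Q * sum a K"
      using s t by (simp_all add: mult_left_mono)
    then show ?thesis by (simp add: algebra_simps)
  qed
  moreover have "4 * (P * Q) \<le> (P + Q)^2"
    using sum_squares_ge_zero[of "P - Q" 0] by (simp add: power2_eq_square algebra_simps)
  ultimately show ?thesis by (simp add: P_def Q_def)
qed

lemma quadratic_small_imp_outside_middle:
  fixes x eps :: real
  assumes "0 \<le> eps" "eps \<le> 1/15" "(1 - eps) * x - x^2 / 2 \<le> 2 * eps / 3"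
  shows "x < 1/2 \<or> 3/2 < x"
proof (rule ccontr)
  assume "\<not> ?thesis"
  then have "(1/2) * (11/60) \<le> x * (1 - eps - x / 2)"
    using assms(1,2) by (intro mult_mono) auto
  then show False using assms by (simp add: power2_eq_square algebra_simps)
qed

lemma quadratic_small_imp_le_twice:
  fixes x eps :: real
  assumes "0 \<le> eps" "eps \<le> 1/6" "0 \<le> x" "x \<le> 1" "(1 - eps) * x - x^2 / 2 \<le> 2 * eps / 3"
  shows "x \<le> 2 * eps"
proof -
  have "x^2 \<le> x" using assms(3,4) by (simp add: power2_eq_square mult_left_le)
  then have "x * (1/2 - eps) \<le> 2 * eps / 3" using assms(5) by (simp add: algebra_simps)
  moreover have "x * (1/3) \<le> x * (1/2 - eps)" using assms(2,3) by (intro mult_left_mono) auto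
  ultimately show ?thesis by simp
qed

lemma common_heavy_coordinate:
  fixes a b :: "'a \<Rightarrow> real" and eps :: real
  assumes "finite K" and eps: "0 \<le> eps" "eps \<le> 1/15"
    and a0: "\<And>j. j \<in> K \<Longrightarrow> 0 \<le> a j" and b0: "\<And>j. j \<in> K \<Longrightarrow> 0 \<le> b j"
    and cross: "\<And>S T. S \<subseteq> K \<Longrightarrow> T \<subseteq> K \<Longrightarrow> S \<inter> T = {} \<Longrightarrow>
                  (1 + 3 * sum a S) * (1 + 3 * sum b T) \<le> 4"
    and s: "1 - eps \<le> sum a K" and t: "1 - eps \<le> sum b K"
  shows "\<exists>j\<in>K. 1 - 3 * eps \<le> a j \<and> 1 - 3 * eps \<le> b j"
proof -
  define w where "w j = a j + b j" for j
  have "sum a K \<le> 1" using cross[of K "{}"] by simp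
  have "sum b K \<le> 1" using cross[of "{}" K] by simp
  have gap: "(1 - eps) * sum w S - (sum w S)^2 / 2 \<le> 2 * eps / 3" if "S \<subseteq> K" for S
    unfolding w_def sum.distrib by (rule cross_bound_subset_mass[OF \<open>finite K\<close> a0 b0 cross s t that])
  have avoid: "sum w S < 1/2 \<or> 1/2 + 1 < sum w S" if "S \<subseteq> K" for S
    using quadratic_small_imp_outside_middle[OF eps gap[OF that]] by simp
  have "\<exists>j\<in>K. 1 < w j"
  proof (rule ccontr)
    assume "\<not> ?thesis"
    then have "sum w K < 1/2"
      using sum_less_if_subset_sums_avoid[of K "1/2" w 1] avoid \<open>finite K\<close> by force
    then show False using s t eps by (simp add: w_def sum.distrib)
  qed
  then obtain j where j: "j \<in> K" "1 < w j" by blast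
  define R where "R = K - {j}"
  have R: "R \<subseteq> K" and split: "sum w K = w j + sum w R"
    using j \<open>finite K\<close> by (auto simp: R_def sum.remove)
  have "0 \<le> sum w R"
    using a0 b0 R unfolding w_def by (intro sum_nonneg) (auto simp: add_nonneg_nonneg subsetD)
  moreover have "sum w R \<le> 1"
    using split j \<open>sum a K \<le> 1\<close> \<open>sum b K \<le> 1\<close> by (simp add: w_def sum.distrib)
  ultimately have "sum w R \<le> 2 * eps"
    using quadratic_small_imp_le_twice eps gap[OF R] by simp
  moreover have "0 \<le> sum a R" "0 \<le> sum b R"
    using a0 b0 R by (auto intro: sum_nonneg)
  moreover have "sum a K = a j + sum a R" "sum b K = b j + sum b R"
    using j \<open>finite K\<close> by (auto simp: R_def sum.remove)
  ultimately have "1 - 3 * eps \<le> a j \<and> 1 - 3 * eps \<le> b j"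
    using s t by (simp add: w_def sum.distrib)
  then show ?thesis using j(1) by blast
qed

definition cube_on :: "nat \<Rightarrow> nat set \<Rightarrow> (nat \<Rightarrow> nat) set" where
  "cube_on m I = PiE I (\<lambda>_. {1..m})"

definition mu_on :: "nat \<Rightarrow> nat set \<Rightarrow> (nat \<Rightarrow> nat) set \<Rightarrow> real" where
  "mu_on m I F = real (card (F \<inter> cube_on m I)) / real m ^ card I"

definition cross_intersecting_on :: "nat set \<Rightarrow> (nat \<Rightarrow> nat) set \<Rightarrow> (nat \<Rightarrow> nat) set \<Rightarrow> bool" where
  "cross_intersecting_on I F G \<longleftrightarrow> (\<forall>x\<in>F. \<forall>y\<in>G. \<exists>k\<in>I. x k = y k)"

definition slice :: "nat \<Rightarrow> nat set \<Rightarrow> (nat \<Rightarrow> nat) set \<Rightarrow> (nat \<Rightarrow> nat) set" where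
  "slice i S F = (\<lambda>x. x(i := undefined)) ` {x \<in> F. x i \<in> S}"

lemma cube_eq_cube_on: "cube m n = cube_on m {1..n}"
  by (simp add: cube_def cube_on_def)

lemma mu_eq_mu_on: "mu m n = mu_on m {1..n}"
  by (simp add: fun_eq_iff mu_def mu_on_def cube_eq_cube_on)

lemma cross_intersecting_eq_on: "cross_intersecting n = cross_intersecting_on {1..n}"
  by (simp add: fun_eq_iff cross_intersecting_def cross_intersecting_on_def)

lemma finite_cube_on: "finite I \<Longrightarrow> finite (cube_on m I)"
  by (simp add: cube_on_def finite_PiE)

lemma inj_on_fun_upd_fiber: "inj_on (\<lambda>x. x(i := u)) {x. x i = c}"
proof (rule inj_onI)
  fix x y assume "x \<in> {x. x i = c}" "y \<in> {x. x i = c}" "x(i := u) = y(i := u)"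
  then have "x(i := u, i := c) = y(i := u, i := c)" by simp
  then show "x = y" using \<open>x \<in> _\<close> \<open>y \<in> _\<close> by (simp add: fun_upd_idem)
qed

lemma slice_subset_cube_on:
  assumes "F \<subseteq> cube_on m I"
  shows "slice i S F \<subseteq> cube_on m (I - {i})"
proof
  fix z assume "z \<in> slice i S F"
  then obtain x where "x \<in> F" "z = x(i := undefined)" by (auto simp: slice_def)
  then show "z \<in> cube_on m (I - {i})"
    using assms by (force simp: cube_on_def PiE_iff extensional_def)
qed

lemma card_slice_singleton: "card (slice i {c} F) = card {x \<in> F. x i = c}"
  unfolding slice_def singleton_iff
  by (rule card_image, rule inj_on_subset[OF inj_on_fun_upd_fiber[of i _ c]]) auto

lemma mu_on_fiber:
  assumes "finite I" "i \<in> I" "F \<subseteq> cube_on m I"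
  shows "mu_on m I {x \<in> F. x i = c} = mu_on m (I - {i}) (slice i {c} F) / m"
proof -
  have "card I = Suc (card (I - {i}))" using assms(1,2) by (rule card.remove)
  moreover have "{x \<in> F. x i = c} \<inter> cube_on m I = {x \<in> F. x i = c}"
    and "slice i {c} F \<inter> cube_on m (I - {i}) = slice i {c} F"
    using assms(3) slice_subset_cube_on[OF assms(3)] by auto
  ultimately show ?thesis by (simp add: mu_on_def card_slice_singleton)
qed

lemma mu_on_sum_fibers:
  assumes "finite I" "i \<in> I" "F \<subseteq> cube_on m I"
  shows "mu_on m I F = (\<Sum>c = 1..m. mu_on m I {x \<in> F. x i = c})"
proof -
  have "finite F" using assms finite_cube_on finite_subset by blast
  have "(\<Union>c \<in> {1..m}. {x \<in> F. x i = c}) = F"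
    using assms(2,3) by (auto simp: cube_on_def PiE_iff)
  moreover have "card (\<Union>c \<in> {1..m}. {x \<in> F. x i = c}) = (\<Sum>c = 1..m. card {x \<in> F. x i = c})"
    using \<open>finite F\<close> by (intro card_UN_disjoint) auto
  ultimately have "card F = (\<Sum>c = 1..m. card {x \<in> F. x i = c})" by simp
  moreover have "F \<inter> cube_on m I = F" "{x \<in> F. x i = c} \<inter> cube_on m I = {x \<in> F. x i = c}" for c
    using assms(3) by auto
  ultimately show ?thesis by (simp add: mu_on_def sum_divide_distrib)
qed

lemma mu_on_eq_avg_slices:
  assumes "finite I" "i \<in> I" "F \<subseteq> cube_on m I"
  shows "mu_on m I F = (\<Sum>c = 1..m. mu_on m (I - {i}) (slice i {c} F)) / m"
  using mu_on_sum_fibers[OF assms] mu_on_fiber[OF assms] by (simp add: sum_divide_distrib)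

lemma mu_on_slice_eq_sum:
  assumes "finite I" "F \<subseteq> cube_on m I" "inj_on (\<lambda>x. x(i := undefined)) F" "finite S"
  shows "mu_on m (I - {i}) (slice i S F) = (\<Sum>c\<in>S. mu_on m (I - {i}) (slice i {c} F))"
proof -
  have "finite F" using assms finite_cube_on finite_subset by blast
  have "card (slice i S F) = card {x \<in> F. x i \<in> S}"
    unfolding slice_def by (rule card_image, rule inj_on_subset[OF assms(3)]) auto
  also have "{x \<in> F. x i \<in> S} = (\<Union>c \<in> S. {x \<in> F. x i = c})" by auto
  also have "card \<dots> = (\<Sum>c\<in>S. card (slice i {c} F))"
    using \<open>finite F\<close> assms(4) by (subst card_UN_disjoint) (auto simp: card_slice_singleton)
  finally show ?thesis
    using slice_subset_cube_on[OF assms(2)]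
    by (simp add: mu_on_def Int_absorb2 sum_divide_distrib)
qed

lemma cross_intersecting_on_slice:
  assumes "cross_intersecting_on I F G" "S \<inter> T = {}"
  shows "cross_intersecting_on (I - {i}) (slice i S F) (slice i T G)"
  unfolding cross_intersecting_on_def
proof (intro ballI)
  fix x' y' assume "x' \<in> slice i S F" "y' \<in> slice i T G"
  then obtain x y where x: "x \<in> F" "x i \<in> S" "x' = x(i := undefined)"
    and y: "y \<in> G" "y i \<in> T" "y' = y(i := undefined)"
    by (auto simp: slice_def)
  obtain k where k: "k \<in> I" "x k = y k"
    using assms(1) x y unfolding cross_intersecting_on_def by blast
  with x y assms(2) have "k \<noteq> i" by auto
  with k x y show "\<exists>k\<in>I - {i}. x' k = y' k" by auto
qed

lemma mu_on_nonneg: "0 \<le> mu_on m I F"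
  by (simp add: mu_on_def)

lemma mu_on_empty_domain_le_1: "mu_on m {} F \<le> 1"
proof -
  have "card (F \<inter> cube_on m {}) \<le> card (cube_on m {})" by (rule card_mono) (auto simp: cube_on_def)
  then show ?thesis by (simp add: mu_on_def cube_on_def)
qed

lemma cross_intersecting_on_mu_bound:
  assumes "finite I" "3 \<le> m" "F \<subseteq> cube_on m I" "G \<subseteq> cube_on m I" "cross_intersecting_on I F G"
  shows "(1 + 3 * mu_on m I F) * (1 + 3 * mu_on m I G) \<le> 4"
  using assms(1,3-5)
proof (induction I arbitrary: F G rule: finite_induct)
  case empty
  then have "F = {} \<or> G = {}" by (auto simp: cross_intersecting_on_def)
  then show ?case
    using mu_on_empty_domain_le_1[of m F] mu_on_empty_domain_le_1[of m G]
    by (auto simp: mu_on_def)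
next
  case (insert a I)
  define f g where "f c = mu_on m I (slice a {c} F)" and "g c = mu_on m I (slice a {c} G)" for c
  have I: "insert a I - {a} = I" using insert.hyps(2) by simp
  have avg: "mu_on m (insert a I) F = sum f {1..m} / m" "mu_on m (insert a I) G = sum g {1..m} / m"
    using mu_on_eq_avg_slices[of "insert a I" a, OF _ _ insert.prems(1)]
      mu_on_eq_avg_slices[of "insert a I" a, OF _ _ insert.prems(2)] insert.hyps(1)
    by (simp_all add: I f_def g_def)
  have offdiag: "(1 + 3 * f c) * (1 + 3 * g d) \<le> 4" if "c \<noteq> d" for c d
  proof -
    have "cross_intersecting_on I (slice a {c} F) (slice a {d} G)"
      using cross_intersecting_on_slice[OF insert.prems(3), of "{c}" "{d}" a] that I by simp
    then show ?thesis
      unfolding f_def g_def using insert.IH slice_subset_cube_on[OF insert.prems(1), of a "{c}"]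
        slice_subset_cube_on[OF insert.prems(2), of a "{d}"] I by simp
  qed
  have "4 \<le> (real m - 1)^2"
    using \<open>3 \<le> m\<close> power_mono[of 2 "real m - 1" 2] by simp
  then have prod: "(\<Sum>c=1..m. 1 + 3 * f c) * (\<Sum>c=1..m. 1 + 3 * g c) \<le> 4 * real m ^ 2"
    using sum_mult_sum_le_if_offdiag_le[of "{1..m}" "\<lambda>c. 1 + 3 * f c" "\<lambda>c. 1 + 3 * g c" 4]
      offdiag \<open>3 \<le> m\<close> by (simp add: f_def g_def mu_on_nonneg)
  have shift: "1 + 3 * (sum h {1..m} / m) = (\<Sum>c=1..m. 1 + 3 * h c) / m" for h :: "nat \<Rightarrow> real"
    using \<open>3 \<le> m\<close> by (simp add: sum.distrib add_divide_distrib sum_distrib_left)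
  have "(1 + 3 * mu_on m (insert a I) F) * (1 + 3 * mu_on m (insert a I) G)
      = (\<Sum>c=1..m. 1 + 3 * f c) * (\<Sum>c=1..m. 1 + 3 * g c) / real m ^ 2"
    by (simp only: avg shift power2_eq_square times_divide_times_eq)
  also have "\<dots> \<le> 4" using prod \<open>3 \<le> m\<close> by (simp add: pos_divide_le_eq)
  finally show ?case .
qed

lemma cross_intersecting_on_slice_sums_bound:
  assumes "finite J" "3 \<le> m" "F \<subseteq> cube_on m J" "G \<subseteq> cube_on m J"
    and "inj_on (\<lambda>x. x(i := undefined)) F" "inj_on (\<lambda>x. x(i := undefined)) G"
    and "cross_intersecting_on J F G" "finite S" "finite T" "S \<inter> T = {}"
  shows "(1 + 3 * (\<Sum>c\<in>S. mu_on m (J - {i}) (slice i {c} F)))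
       * (1 + 3 * (\<Sum>c\<in>T. mu_on m (J - {i}) (slice i {c} G))) \<le> 4"
proof -
  have "(1 + 3 * mu_on m (J - {i}) (slice i S F)) * (1 + 3 * mu_on m (J - {i}) (slice i T G)) \<le> 4"
    using assms by (intro cross_intersecting_on_mu_bound slice_subset_cube_on cross_intersecting_on_slice) simp_all
  moreover have "mu_on m (J - {i}) (slice i S F) = (\<Sum>c\<in>S. mu_on m (J - {i}) (slice i {c} F))"
    and "mu_on m (J - {i}) (slice i T G) = (\<Sum>c\<in>T. mu_on m (J - {i}) (slice i {c} G))"
    using assms by (blast intro: mu_on_slice_eq_sum)+
  ultimately show ?thesis by (simp only:)
qed

lemma inj_on_Tpt:
  assumes "\<forall>x\<in>Tfam i k F. x i \<noteq> k"
  shows "inj_on (Tpt i k) F"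
proof (rule inj_onI)
  fix x y assume x: "x \<in> F" and y: "y \<in> F" and eq: "Tpt i k x = Tpt i k y"
  have "x i = k \<longleftrightarrow> y i = k"
  proof -
    have "z i \<noteq> k" if "z \<in> F" "z' \<in> F" "z' i \<noteq> k" "Tpt i k z = Tpt i k z'" for z z'
    proof -
      have "Tpt i k z \<in> F" using that by (simp add: Tpt_def)
      then have "z \<in> Tfam i k F" using \<open>z \<in> F\<close> by (simp add: Tfam_def)
      then show ?thesis using assms by blast
    qed
    then show ?thesis using x y eq by metis
  qed
  then consider "x i = k" "y i = k" | "x i \<noteq> k" "y i \<noteq> k" by blast
  then show "x = y"
  proof cases
    case 1
    then have "x(i := 1) = y(i := 1)" using eq by (simp add: Tpt_def)
    then show ?thesis using 1 inj_on_fun_upd_fiber[of i 1 k] by (auto dest: inj_onD)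
  next
    case 2
    then show ?thesis using eq by (simp add: Tpt_def)
  qed
qed

(* The bound on x i is the induction invariant: it makes Tpt i k injective on F. *)
lemma Tupto_subset_coord_1D:
  "Tupto i k F \<subseteq> {x. x i = 1} \<Longrightarrow>
     (\<forall>x\<in>F. x i = 1 \<or> x i \<le> k) \<and> inj_on (\<lambda>x. x(i := undefined)) F"
proof (induction i k F rule: Tupto.induct)
  case (1 i k F)
  show ?case
  proof (cases "k < 2")
    case True
    then have F1: "F \<subseteq> {x. x i = 1}"
      using "1.prems" Tupto.simps[of i k F] by (simp only: if_P)
    then show ?thesis using inj_on_subset[OF inj_on_fun_upd_fiber F1] by blast
  next
    case False
    have Tupto_step: "Tupto i k F = Tupto i (k - 1) (Tfam i k F)"
      by (rule trans[OF Tupto.simps]) (simp add: False del: Tupto.simps)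
    have IH: "\<forall>x\<in>Tfam i k F. x i = 1 \<or> x i \<le> k - 1"
      "inj_on (\<lambda>x. x(i := undefined)) (Tfam i k F)"
      using "1.IH"[OF False] "1.prems"[unfolded Tupto_step] by blast+
    have fixed: "x \<in> Tfam i k F" if "x \<in> F" "x i \<noteq> k" for x
      using that by (force simp: Tfam_def Tpt_def)
    have "\<forall>x\<in>F. x i = 1 \<or> x i \<le> k" using IH(1) fixed by fastforce
    moreover have "inj_on ((\<lambda>x. x(i := undefined)) \<circ> Tpt i k) F"
    proof (rule comp_inj_on)
      show "inj_on (Tpt i k) F" using IH(1) False by (intro inj_on_Tpt) fastforce
      show "inj_on (\<lambda>x. x(i := undefined)) (Tpt i k ` F)"
        by (rule inj_on_subset[OF IH(2)]) (auto simp: Tfam_def)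
    qed
    moreover have "(\<lambda>x. x(i := undefined)) \<circ> Tpt i k = (\<lambda>x. x(i := undefined))"
      by (simp add: fun_eq_iff Tpt_def)
    ultimately show ?thesis by (simp only:)
  qed
qed

theorem lemma4p7:
  fixes m n i :: nat and eps :: real and A B :: "(nat \<Rightarrow> nat) set"
  assumes "0 < eps" and "eps \<le> 1/15" and "m \<ge> 3" and "i \<in> {1..n}"
    and "A \<subseteq> cube m n" and "B \<subseteq> cube m n"
    and "cross_intersecting n A B"
    and "mu m n A \<ge> (1 - eps) * (1 / real m)"
    and "mu m n B \<ge> (1 - eps) * (1 / real m)"
    and "Ti m i A \<subseteq> dict m n i 1" and "Ti m i B \<subseteq> dict m n i 1"
  shows "\<exists>j\<in>{1..m}. mu m n (A \<inter> dict m n i j) \<ge> (1 - 3 * eps) * (1 / real m)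
                   \<and> mu m n (B \<inter> dict m n i j) \<ge> (1 - 3 * eps) * (1 / real m)"
proof -
  define I where "I = {1..n} - {i}"
  define a b where "a j = mu_on m I (slice i {j} A)" and "b j = mu_on m I (slice i {j} B)" for j
  have m: "0 < real m" and "finite {1..n}" using \<open>m \<ge> 3\<close> by simp_all
  have cubes: "A \<subseteq> cube_on m {1..n}" "B \<subseteq> cube_on m {1..n}"
    using assms(5,6) by (simp_all add: cube_eq_cube_on)
  have inj: "inj_on (\<lambda>x. x(i := undefined)) A" "inj_on (\<lambda>x. x(i := undefined)) B"
    using Tupto_subset_coord_1D[of i m A] Tupto_subset_coord_1D[of i m B] assms(10,11)
    unfolding Ti_def dict_def by blast+
  have "A \<inter> dict m n i j = {x \<in> A. x i = j}" "B \<inter> dict m n i j = {x \<in> B. x i = j}" for j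
    using assms(5,6) by (auto simp: dict_def)
  then have fiber: "mu m n (A \<inter> dict m n i j) = a j / m" "mu m n (B \<inter> dict m n i j) = b j / m" for j
    using mu_on_fiber[OF \<open>finite {1..n}\<close> assms(4)] cubes by (simp_all add: mu_eq_mu_on a_def b_def I_def)
  have "1 - eps \<le> sum a {1..m}" "1 - eps \<le> sum b {1..m}"
    using assms(8,9) mu_on_eq_avg_slices[OF \<open>finite {1..n}\<close> assms(4)] cubes m
    by (simp_all add: mu_eq_mu_on a_def b_def I_def le_divide_eq)
  moreover have "(1 + 3 * sum a S) * (1 + 3 * sum b T) \<le> 4"
    if "S \<subseteq> {1..m}" "T \<subseteq> {1..m}" "S \<inter> T = {}" for S T
    using cross_intersecting_on_slice_sums_bound[OF \<open>finite {1..n}\<close> \<open>m \<ge> 3\<close> cubes inj,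
        OF assms(7)[unfolded cross_intersecting_eq_on] finite_subset[OF that(1)] finite_subset[OF that(2)]]
      that(3)
    by (simp add: a_def b_def I_def)
  ultimately obtain j where "j \<in> {1..m}" "1 - 3 * eps \<le> a j" "1 - 3 * eps \<le> b j"
    using common_heavy_coordinate[of "{1..m}" eps a b] assms(1,2) by (auto simp: a_def b_def mu_on_nonneg)
  then show ?thesis using m by (intro bexI[of _ j]) (simp_all add: fiber divide_right_mono)
qed

end
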